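(* Let $0<a<D$. For every $\omega\in\Omega$ and every nonnegative global solution $(s(t),m_1(t),m_2(t))$, $t\ge0$, of the random chemostat system $$s'(t)=(D+\psi(\xi^*(\theta_t\omega)))(s_{\mathrm{in}}-\alpha s(t))-c\mu(s(t))(m_1(t)+m_2(t))+rd\,m_1(t),$$ $$m_1'(t)=m_1(t)\big(-d-\alpha(D+\psi(\xi^*(\theta_t\omega)))+g\mu(s(t))-r_1m_1(t)-r_2m_2(t)-\alpha_1\big)+\alpha_2m_2(t),$$ $$m_2'(t)=m_2(t)\big(-d+g\mu(s(t))-r_1m_1(t)-r_2m_2(t)-\alpha_2\big)+\alpha_1m_1(t),$$ there exist $T>0$ and $s^*>0$ such that $s(t)\ge s^*$ for all $t\ge T$.
   Context: Let $\Omega$ be the set of continuous functions $\omega:\mathbb{R}\to\mathbb{R}$ with $\omega(0)=0$, with Borel $\sigma$-algebra and Wiener measure, and $\theta_t\omega(\cdot)=\omega(\cdot+t)-\omega(t)$ the Wiener shift. The Ornstein–Uhlenbeck process is $\xi^*(\theta_t\omega)=-\int_{-\infty}^0 e^{s}\,\theta_t\omega(s)\,ds$. For a constant $a>0$, $\psi(\xi)=\frac{2a}{\pi}\arctan(\xi)$. Parameters: $D>0$, $s_{\mathrm{in}}>0$, $\alpha>0$, $c>0$, $g\in(0,c]$, $r\in(0,1)$, $d>0$, $\alpha_1,\alpha_2\ge0$, $r_1,r_2\ge0$. The consumption function $\mu:[0,+\infty)\to[0,+\infty)$ is continuous, $\mu(0)=0$, $\mu(x)>0$ for $x>0$, and $\mu(x)\le1$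 for all $x\ge0$. *)

theory Defs
  imports "HOL-Analysis.Analysis"
begin

definition Omega :: "(real \<Rightarrow> real) set" where
  "Omega = {w. continuous_on UNIV w \<and> w 0 = 0}"

definition wshift :: "real \<Rightarrow> (real \<Rightarrow> real) \<Rightarrow> (real \<Rightarrow> real)" where
  "wshift t w = (\<lambda>s. w (s + t) - w t)"

text \<open>Stationary Ornstein--Uhlenbeck process xi*(w) = - int_{-inf}^0 e^s w(s) ds (Lebesgue integral).\<close>
definition xi_star :: "(real \<Rightarrow> real) \<Rightarrow> real" where
  "xi_star w = - (LINT s:{..0}|lborel. exp s * w s)"

definition psi :: "real \<Rightarrow> real \<Rightarrow> real" where
  "psi a x = 2 * a / pi * arctan x"

end

theory Submission
  imports Defs
begin

text \<open>Pathwise, the random system is a nonautonomous chemostat whose dilation rate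
  \<open>E t = D + psi a (xi_star (wshift t w))\<close> stays in \<open>[D - a, D + a]\<close>, because \<open>psi a\<close> takes values
  in \<open>(-a, a)\<close>. The weighted total mass \<open>z = g s + c (m1 + m2)\<close> then satisfies the linear
  differential inequality \<open>z' \<le> g (D + a) s_in - \<kappa> z\<close> with \<open>\<kappa> = min (alpha (D - a)) (d (1 - r))\<close>,
  so it stays bounded. Since \<open>mu\<close> is continuous with \<open>mu 0 = 0\<close>, the consumption term
  \<open>c mu(s) (m1 + m2)\<close> is small while \<open>s\<close> is small, whereas the inflow is at least
  \<open>(D - a) s_in / 2\<close>; hence \<open>s\<close> grows at a fixed positive rate while it is below some level
  \<open>\<delta>\<close>, reaches \<open>\<delta>\<close> in bounded time and never falls below it again.\<close>

lemma abs_psi_le: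
  assumes "0 \<le> a"
  shows "\<bar>psi a x\<bar> \<le> a"
proof -
  have "\<bar>arctan x\<bar> \<le> pi / 2"
    using arctan_bounded[of x] by linarith
  then have "2 * a / pi * \<bar>arctan x\<bar> \<le> 2 * a / pi * (pi / 2)"
    using assms by (intro mult_left_mono) auto
  then show ?thesis
    using assms by (simp add: psi_def abs_mult)
qed

lemma DERIV_nonneg_imp_increasing_within_atLeast:
  fixes f f' :: "real \<Rightarrow> real"
  assumes "a \<le> u" "u \<le> t"
    and deriv: "\<And>x. a \<le> x \<Longrightarrow> (f has_real_derivative f' x) (at x within {a..})"
    and nonneg: "\<And>x. u < x \<Longrightarrow> x < t \<Longrightarrow> 0 \<le> f' x"
  shows "f u \<le> f t"
proof (rule DERIV_nonneg_imp_increasing_open[OF \<open>u \<le> t\<close>])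
  fix x assume x: "u < x" "x < t"
  then have "at x within {a..} = at x"
    using \<open>a \<le> u\<close> by (intro at_within_interior) (simp add: interior_real_atLeast)
  with deriv[of x] nonneg[OF x] x \<open>a \<le> u\<close>
  show "\<exists>y. (f has_real_derivative y) (at x) \<and> 0 \<le> y"
    by auto
next
  have "continuous_on {a..} f"
    unfolding continuous_on_eq_continuous_within
    using deriv by (metis DERIV_continuous atLeast_iff)
  then show "continuous_on {u..t} f"
    by (rule continuous_on_subset) (use \<open>a \<le> u\<close> in auto)
qed

lemma linear_differential_inequality_bound:
  fixes z z' :: "real \<Rightarrow> real"
  assumes "0 < \<kappa>"
    and deriv: "\<And>t. 0 \<le> t \<Longrightarrow> (z has_real_derivative z' t) (at t within {0..})"
    and rate: "\<And>t. 0 \<le> t \<Longrightarrow> z' t \<le> K - \<kappa> * z t"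
    and "0 \<le> t"
  shows "z t \<le> max (z 0) (K / \<kappa>)"
proof (rule ccontr)
  assume above: "\<not> z t \<le> max (z 0) (K / \<kappa>)"
  define W where "W x = (K / \<kappa> - z x) * exp (\<kappa> * x)" for x
  have W_increasing: "W 0 \<le> W t"
  proof (rule DERIV_nonneg_imp_increasing_within_atLeast[OF order_refl \<open>0 \<le> t\<close>])
    fix x :: real assume "0 \<le> x"
    then show "(W has_real_derivative (K - \<kappa> * z x - z' x) * exp (\<kappa> * x)) (at x within {0..})"
      unfolding W_def using \<open>0 < \<kappa>\<close>
      by (auto intro!: derivative_eq_intros deriv simp: field_simps)
  next
    fix x :: real assume "0 < x"
    then show "0 \<le> (K - \<kappa> * z x - z' x) * exp (\<kappa> * x)"
      using rate[of x] by simp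
  qed
  have "1 \<le> exp (\<kappa> * t)"
    using \<open>0 < \<kappa>\<close> \<open>0 \<le> t\<close> by simp
  then have "W t \<le> K / \<kappa> - z t"
    unfolding W_def using above mult_left_mono_neg[of 1 "exp (\<kappa> * t)" "K / \<kappa> - z t"] by simp
  with W_increasing above show False
    unfolding W_def by simp
qed

lemma linear_rise_while_below_level:
  fixes s s' :: "real \<Rightarrow> real"
  assumes "0 \<le> u" "u \<le> t"
    and deriv: "\<And>t. 0 \<le> t \<Longrightarrow> (s has_real_derivative s' t) (at t within {0..})"
    and rate: "\<And>t. 0 \<le> t \<Longrightarrow> s t < \<delta> \<Longrightarrow> \<beta> \<le> s' t"
    and stays_below: "\<And>x. u < x \<Longrightarrow> x < t \<Longrightarrow> s x < \<delta>"
  shows "s u + \<beta> * (t - u) \<le> s t"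
proof -
  have "s u - \<beta> * u \<le> s t - \<beta> * t"
  proof (rule DERIV_nonneg_imp_increasing_within_atLeast[OF assms(1,2)])
    show "((\<lambda>x. s x - \<beta> * x) has_real_derivative s' x - \<beta>) (at x within {0..})"
      if "0 \<le> x" for x
      using that by (auto intro!: derivative_eq_intros deriv)
    show "0 \<le> s' x - \<beta>" if "u < x" "x < t" for x
      using rate[of x] stays_below[OF that] that \<open>0 \<le> u\<close> by simp
  qed
  then show ?thesis
    by (simp add: algebra_simps)
qed

lemma ge_level_if_rate_ge_below_level:
  fixes s s' :: "real \<Rightarrow> real"
  assumes "0 < \<beta>" "0 < \<delta>" "0 \<le> s 0"
    and deriv: "\<And>t. 0 \<le> t \<Longrightarrow> (s has_real_derivative s' t) (at t within {0..})"
    and rate: "\<And>t. 0 \<le> t \<Longrightarrow> s t < \<delta> \<Longrightarrow> \<beta> \<le> s' t"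
    and "\<delta> / \<beta> \<le> t"
  shows "\<delta> \<le> s t"
proof (rule ccontr)
  assume below: "\<not> \<delta> \<le> s t"
  have "\<delta> \<le> \<beta> * t"
    using \<open>\<delta> / \<beta> \<le> t\<close> \<open>0 < \<beta>\<close> by (simp add: field_simps)
  then have "0 \<le> t"
    using \<open>0 < \<beta>\<close> \<open>0 < \<delta>\<close> by (smt (verit) mult_pos_neg)
  define S where "S = {v \<in> {0..t}. \<delta> \<le> s v}"
  show False
  proof (cases "S = {}")
    case True
    have "s x < \<delta>" if "0 < x" "x < t" for x
    proof -
      have "x \<notin> S"
        using True by simp
      then show ?thesis
        using that by (simp add: S_def)
    qed
    then have "s 0 + \<beta> * (t - 0) \<le> s t"
      using \<open>0 \<le> t\<close> by (intro linear_rise_while_below_level[OF _ _ deriv rate]) auto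
    with \<open>\<delta> \<le> \<beta> * t\<close> \<open>0 \<le> s 0\<close> below show False
      by simp
  next
    case False
    have "continuous_on {0..t} s"
      using deriv DERIV_continuous continuous_on_eq_continuous_within
      by (metis atLeastAtMost_iff continuous_within_subset atLeast_iff subsetI)
    then have "closed S"
      using continuous_closed_preimage[OF _ closed_atLeastAtMost closed_atLeast[of \<delta>]]
      by (simp add: S_def Int_def vimage_def)
    moreover have "bdd_above S"
      by (auto simp: S_def intro: bdd_aboveI[of _ t])
    ultimately have last: "Sup S \<in> S"
      using False closed_contains_Sup by blast
    have "s x < \<delta>" if "Sup S < x" "x < t" for x
      using that cSup_upper[OF _ \<open>bdd_above S\<close>, of x] last by (force simp: S_def)
    then have "s (Sup S) + \<beta> * (t - Sup S) \<le> s t"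
      using last by (intro linear_rise_while_below_level[OF _ _ deriv rate]) (auto simp: S_def)
    with last below \<open>0 < \<beta>\<close> show False
      by (auto simp: S_def) (smt (verit) mult_nonneg_nonneg)
  qed
qed

locale bounded_dilation_chemostat =
  fixes Emin Emax s_in alpha c g r d alpha1 alpha2 r1 r2 :: real
    and mu E s m1 m2 :: "real \<Rightarrow> real"
  assumes Emin_pos: "0 < Emin" and E_bounds: "\<And>t. Emin \<le> E t \<and> E t \<le> Emax"
    and s_in_pos: "0 < s_in" and alpha_pos: "0 < alpha" and g_nonneg: "0 \<le> g" and g_le_c: "g \<le> c"
    and r_nonneg: "0 \<le> r" and r_less_1: "r < 1" and d_pos: "0 < d"
    and r1_nonneg: "0 \<le> r1" and r2_nonneg: "0 \<le> r2"
    and mu_continuous: "continuous (at 0 within {0..}) mu" and mu_0: "mu 0 = 0"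
    and mu_nonneg: "\<And>x. 0 \<le> x \<Longrightarrow> 0 \<le> mu x"
    and solution_nonneg: "\<And>t. 0 \<le> t \<Longrightarrow> 0 \<le> s t \<and> 0 \<le> m1 t \<and> 0 \<le> m2 t"
    and s_deriv: "\<And>t. 0 \<le> t \<Longrightarrow> (s has_real_derivative
          E t * (s_in - alpha * s t) - c * mu (s t) * (m1 t + m2 t) + r * d * m1 t) (at t within {0..})"
    and m1_deriv: "\<And>t. 0 \<le> t \<Longrightarrow> (m1 has_real_derivative
          m1 t * (- d - alpha * E t + g * mu (s t) - r1 * m1 t - r2 * m2 t - alpha1) + alpha2 * m2 t)
          (at t within {0..})"
    and m2_deriv: "\<And>t. 0 \<le> t \<Longrightarrow> (m2 has_real_derivative
          m2 t * (- d + g * mu (s t) - r1 * m1 t - r2 * m2 t - alpha2) + alpha1 * m1 t)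
          (at t within {0..})"
begin

definition mass :: "real \<Rightarrow> real"
  where "mass t = g * s t + c * (m1 t + m2 t)"

definition mass_rate :: "real \<Rightarrow> real"
  where "mass_rate t = g * (E t * (s_in - alpha * s t) - c * mu (s t) * (m1 t + m2 t) + r * d * m1 t)
    + c * ((m1 t * (- d - alpha * E t + g * mu (s t) - r1 * m1 t - r2 * m2 t - alpha1) + alpha2 * m2 t)
         + (m2 t * (- d + g * mu (s t) - r1 * m1 t - r2 * m2 t - alpha2) + alpha1 * m1 t))"

lemma mass_has_derivative:
  "0 \<le> t \<Longrightarrow> (mass has_real_derivative mass_rate t) (at t within {0..})"
  unfolding mass_def[abs_def] mass_rate_def
  by (auto intro!: derivative_eq_intros s_deriv m1_deriv m2_deriv simp: algebra_simps)

definition mass_decay :: real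
  where "mass_decay = min (alpha * Emin) (d * (1 - r))"

lemma mass_decay_pos: "0 < mass_decay"
  using Emin_pos alpha_pos d_pos r_less_1 by (simp add: mass_decay_def)

lemma mass_rate_le:
  assumes "0 \<le> t"
  shows "mass_rate t \<le> g * Emax * s_in - mass_decay * mass t"
proof -
  let ?x = "m1 t" and ?y = "m2 t" and ?s = "s t"
  have nonneg: "0 \<le> ?x" "0 \<le> ?y" "0 \<le> ?s"
    using solution_nonneg[OF assms] by auto
  have c_nonneg: "0 \<le> c"
    using g_nonneg g_le_c by linarith
  have decay_le: "mass_decay \<le> alpha * E t" "mass_decay \<le> d * (1 - r)" "mass_decay \<le> d"
    using E_bounds[of t] alpha_pos r_nonneg d_pos
    by (auto simp: mass_decay_def min.coboundedI1 min.coboundedI2 mult_left_mono)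
  \<comment> \<open>Consumption by the biomass and the exchange between \<open>m1\<close> and \<open>m2\<close> cancel.\<close>
  have rate_eq: "mass_rate t = g * E t * s_in - g * (alpha * E t) * ?s - c * d * ?y
      - (c * d - g * r * d) * ?x - c * alpha * E t * ?x - c * (?x + ?y) * (r1 * ?x + r2 * ?y)"
    unfolding mass_rate_def by (simp add: algebra_simps)
  have "g * E t * s_in \<le> g * Emax * s_in"
    using E_bounds[of t] g_nonneg s_in_pos by (simp add: mult_left_mono mult_right_mono)
  moreover have "g * mass_decay * ?s \<le> g * (alpha * E t) * ?s"
    using decay_le g_nonneg nonneg by (simp add: mult_left_mono mult_right_mono)
  moreover have "c * mass_decay * ?y \<le> c * d * ?y"
    using decay_le c_nonneg nonneg by (simp add: mult_left_mono mult_right_mono)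
  moreover have "c * mass_decay * ?x \<le> (c * d - g * r * d) * ?x"
  proof -
    have "c * mass_decay \<le> c * (d * (1 - r))"
      using decay_le c_nonneg by (simp add: mult_left_mono)
    also have "\<dots> \<le> c * d - g * r * d"
      using mult_right_mono[OF g_le_c, of "r * d"] r_nonneg d_pos by (simp add: algebra_simps)
    finally show ?thesis
      using nonneg by (simp add: mult_right_mono)
  qed
  moreover have "0 \<le> c * alpha * E t * ?x" "0 \<le> c * (?x + ?y) * (r1 * ?x + r2 * ?y)"
    using c_nonneg alpha_pos E_bounds[of t] Emin_pos nonneg r1_nonneg r2_nonneg by simp_all
  ultimately show ?thesis
    unfolding rate_eq mass_def by (simp add: algebra_simps)
qed

lemma mass_bounded:
  "0 \<le> t \<Longrightarrow> mass t \<le> max (mass 0) (g * Emax * s_in / mass_decay)"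
  by (rule linear_differential_inequality_bound[OF mass_decay_pos mass_has_derivative mass_rate_le])

lemma biomass_bounded:
  obtains M where "0 \<le> M" and "\<And>t. 0 \<le> t \<Longrightarrow> c * (m1 t + m2 t) \<le> M"
proof
  let ?M = "max (mass 0) (g * Emax * s_in / mass_decay)"
  show "c * (m1 t + m2 t) \<le> ?M" if "0 \<le> t" for t
    using mass_bounded[OF that] solution_nonneg[OF that] g_nonneg
    unfolding mass_def by (smt (verit) mult_nonneg_nonneg)
  then show "0 \<le> ?M"
    using solution_nonneg[of 0] g_nonneg g_le_c by (smt (verit) mult_nonneg_nonneg)
qed

lemma substrate_rate_ge:
  assumes "0 \<le> t" "c * (m1 t + m2 t) \<le> M" "0 \<le> M"
    and small_s: "alpha * s t \<le> s_in / 2" and small_mu: "mu (s t) * (M + 1) \<le> Emin * s_in / 4"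
  shows "Emin * s_in / 4 \<le> E t * (s_in - alpha * s t) - c * mu (s t) * (m1 t + m2 t) + r * d * m1 t"
proof -
  have nonneg: "0 \<le> s t" "0 \<le> m1 t" "0 \<le> m2 t" "0 \<le> c * (m1 t + m2 t)"
    using solution_nonneg[OF \<open>0 \<le> t\<close>] g_nonneg g_le_c by auto
  have "c * mu (s t) * (m1 t + m2 t) \<le> mu (s t) * (M + 1)"
    using mult_left_mono[of "c * (m1 t + m2 t)" "M + 1" "mu (s t)"] assms(2) mu_nonneg nonneg
    by (simp add: algebra_simps)
  moreover have "Emin * (s_in / 2) \<le> E t * (s_in - alpha * s t)"
    using mult_mono[of Emin "E t" "s_in / 2" "s_in - alpha * s t"] E_bounds[of t] Emin_pos s_in_pos small_s
    by simp
  moreover have "0 \<le> r * d * m1 t"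
    using r_nonneg d_pos nonneg by simp
  ultimately show ?thesis
    using small_mu by linarith
qed

theorem substrate_persists: "\<exists>T>0. \<exists>sstar>0. \<forall>t\<ge>T. sstar \<le> s t"
proof -
  obtain M where "0 \<le> M" and biomass_le: "\<And>t. 0 \<le> t \<Longrightarrow> c * (m1 t + m2 t) \<le> M"
    using biomass_bounded by blast
  define \<beta> where "\<beta> = Emin * s_in / 4"
  have "0 < \<beta>"
    using Emin_pos s_in_pos by (simp add: \<beta>_def)
  then have "0 < \<beta> / (M + 1)"
    using \<open>0 \<le> M\<close> by simp
  then obtain \<delta> where "0 < \<delta>"
    and \<delta>: "\<forall>x\<in>{0..}. dist x 0 < \<delta> \<longrightarrow> dist (mu x) (mu 0) < \<beta> / (M + 1)"
    using mu_continuous unfolding continuous_within_eps_delta by blast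
  have mu_small: "mu x * (M + 1) < \<beta>" if "0 \<le> x" "x < \<delta>" for x
  proof -
    have "mu x < \<beta> / (M + 1)"
      using \<delta> that mu_0 mu_nonneg[OF that(1)] by (auto simp: dist_real_def)
    then show ?thesis
      using \<open>0 \<le> M\<close> by (simp add: field_simps)
  qed
  define level where "level = min \<delta> (s_in / (2 * alpha))"
  have "0 < level"
    using \<open>0 < \<delta>\<close> s_in_pos alpha_pos by (simp add: level_def)
  have rate_ge: "\<beta> \<le> E t * (s_in - alpha * s t) - c * mu (s t) * (m1 t + m2 t) + r * d * m1 t"
    if "0 \<le> t" "s t < level" for t
    unfolding \<beta>_def
  proof (rule substrate_rate_ge[OF that(1) biomass_le[OF that(1)] \<open>0 \<le> M\<close>])
    show "alpha * s t \<le> s_in / 2"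
      using that alpha_pos by (simp add: level_def field_simps)
    show "mu (s t) * (M + 1) \<le> Emin * s_in / 4"
      using mu_small[of "s t"] that solution_nonneg[OF that(1)] by (simp add: level_def \<beta>_def)
  qed
  have "level \<le> s t" if "level / \<beta> \<le> t" for t
    using ge_level_if_rate_ge_below_level[OF \<open>0 < \<beta>\<close> \<open>0 < level\<close> _ s_deriv rate_ge that]
      solution_nonneg[of 0] by simp
  then show ?thesis
    using \<open>0 < level\<close> \<open>0 < \<beta>\<close> divide_pos_pos by blast
qed

end

theorem proposition4p1:
  fixes a D s_in alpha c g r d alpha1 alpha2 r1 r2 :: real
    and mu :: "real \<Rightarrow> real"
    and w :: "real \<Rightarrow> real"
    and s m1 m2 :: "real \<Rightarrow> real"
  assumes "0 < a" "a < D"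
    and "s_in > 0" "alpha > 0" "c > 0" "0 < g" "g \<le> c" "0 < r" "r < 1" "d > 0"
    and "alpha1 \<ge> 0" "alpha2 \<ge> 0" "r1 \<ge> 0" "r2 \<ge> 0"
    and "continuous_on {0..} mu" "mu 0 = 0" "\<forall>x>0. mu x > 0" "\<forall>x\<ge>0. mu x \<le> 1"
    and "w \<in> Omega"
    and "\<forall>t\<ge>0. s t \<ge> 0 \<and> m1 t \<ge> 0 \<and> m2 t \<ge> 0"
    and "\<forall>t\<ge>0. (s has_real_derivative
            ((D + psi a (xi_star (wshift t w))) * (s_in - alpha * s t)
             - c * mu (s t) * (m1 t + m2 t) + r * d * m1 t)) (at t within {0..})"
    and "\<forall>t\<ge>0. (m1 has_real_derivative
            (m1 t * (- d - alpha * (D + psi a (xi_star (wshift t w))) + g * mu (s t)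
                     - r1 * m1 t - r2 * m2 t - alpha1) + alpha2 * m2 t)) (at t within {0..})"
    and "\<forall>t\<ge>0. (m2 has_real_derivative
            (m2 t * (- d + g * mu (s t) - r1 * m1 t - r2 * m2 t - alpha2) + alpha1 * m1 t))
            (at t within {0..})"
  shows "\<exists>T>0. \<exists>sstar>0. \<forall>t\<ge>T. s t \<ge> sstar"
proof -
  have dilation_bounds: "D - a \<le> D + psi a x \<and> D + psi a x \<le> D + a" for x
    using abs_psi_le[of a x] \<open>0 < a\<close> by auto
  have mu_nonneg: "0 \<le> mu x" if "0 \<le> x" for x
    using that assms(16,17) by (auto simp: le_less)
  interpret bounded_dilation_chemostat "D - a" "D + a" s_in alpha c g r d alpha1 alpha2 r1 r2
      mu "\<lambda>t. D + psi a (xi_star (wshift t w))" s m1 m2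
    using assms dilation_bounds mu_nonneg
    by unfold_locales (auto simp: continuous_on_eq_continuous_within)
  from substrate_persists show ?thesis
    by simp
qed

end
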